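(* Let $P,Q\in\mathbb P_d$ and $x\in\mathbb R$. Let $U_x:=\operatorname{Pol}(P^{x/2}Q^{1/2})$ and $V_x:=\operatorname{Pol}(P^{1/2}Q^{x/2})$. Then $$\operatorname{F}_{P^x}(P,Q)=\operatorname{Tr}\big[P^{1/2}U_xQ^{1/2}\big]=\operatorname{Tr}\big[P^{\frac{1-x}{2}}\sqrt{P^{x/2}QP^{x/2}}\big],\qquad \operatorname{F}_{Q^x}(P,Q)=\operatorname{Tr}\big[P^{1/2}V_xQ^{1/2}\big]=\operatorname{Tr}\big[\sqrt{Q^{x/2}PQ^{x/2}}\,Q^{\frac{1-x}{2}}\big].$$
   Context: $\mathbb P_d$ is the set of $d\times d$ complex positive definite matrices. For an invertible matrix $A$, $\operatorname{Pol}(A):=A(A^*A)^{-1/2}$ is its unitary polar factor. The generalized fidelity is $\operatorname{F}_R(P,Q):=\operatorname{Tr}\big[\sqrt{R^{1/2}PR^{1/2}}\,R^{-1}\sqrt{R^{1/2}QR^{1/2}}\big]$ for $R\in\mathbb P_d$. *)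

theory Defs
  imports "HOL-Analysis.Analysis"
begin

text \<open>Complex d x d matrices are modelled as complex^'n^'n, with d = CARD('n).\<close>

definition cadj :: "complex^'n^'n \<Rightarrow> complex^'n^'n" where
  "cadj A = (\<chi> i j. cnj (A $ j $ i))"

definition unitary_mat :: "complex^'n^'n \<Rightarrow> bool" where
  "unitary_mat U \<longleftrightarrow> cadj U ** U = mat 1 \<and> U ** cadj U = mat 1"

definition hermitian_mat :: "complex^'n^'n \<Rightarrow> bool" where
  "hermitian_mat A \<longleftrightarrow> cadj A = A"

definition cquad :: "complex^'n^'n \<Rightarrow> complex^'n \<Rightarrow> complex" where
  "cquad A v = (\<Sum>i\<in>UNIV. cnj (v $ i) * (A *v v) $ i)"

definition posdef_mat :: "complex^'n^'n \<Rightarrow> bool" where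
  "posdef_mat A \<longleftrightarrow> hermitian_mat A \<and> (\<forall>v. v \<noteq> 0 \<longrightarrow> Re (cquad A v) > 0)"

definition cdiag :: "('n \<Rightarrow> real) \<Rightarrow> complex^'n^'n" where
  "cdiag l = (\<chi> i j. if i = j then complex_of_real (l i) else 0)"

text \<open>Functional calculus for positive semidefinite matrices via the spectral
  decomposition A = U diag(l) U^*, l \<ge> 0 (well defined independently of the choice).\<close>
definition mfun :: "(real \<Rightarrow> real) \<Rightarrow> complex^'n^'n \<Rightarrow> complex^'n^'n" where
  "mfun f A = (SOME B. \<exists>U l. unitary_mat U \<and> (\<forall>i. l i \<ge> 0) \<and>
       A = U ** cdiag l ** cadj U \<and> B = U ** cdiag (\<lambda>i. f (l i)) ** cadj U)"

definition mpow :: "complex^'n^'n \<Rightarrow> real \<Rightarrow> complex^'n^'n" where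
  "mpow A x = mfun (\<lambda>t. t powr x) A"

definition msqrt :: "complex^'n^'n \<Rightarrow> complex^'n^'n" where
  "msqrt A = mfun sqrt A"

definition Pol :: "complex^'n^'n \<Rightarrow> complex^'n^'n" where
  "Pol A = A ** mpow (cadj A ** A) (-1/2)"

definition genF :: "complex^'n^'n \<Rightarrow> complex^'n^'n \<Rightarrow> complex^'n^'n \<Rightarrow> complex" where
  "genF R P Q = trace (msqrt (mpow R (1/2) ** P ** mpow R (1/2)) ** matrix_inv R **
                       msqrt (mpow R (1/2) ** Q ** mpow R (1/2)))"

end

theory Submission
  imports Defs
begin

text \<open>With R = P^x every matrix in the definition of F_R(P,Q) but one is a power of P:
  sqrt(R^(1/2) P R^(1/2)) = P^((1+x)/2) and R^(-1) = P^(-x), so the fidelity collapses to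
  Tr[P^((1-x)/2) sqrt M] with M = P^(x/2) Q P^(x/2).  Since A = P^(x/2) Q^(1/2) satisfies
  A A^* = M, its polar factor is U_x = M^(-1/2) A, hence
  P^(1/2) U_x Q^(1/2) = P^(1/2) M^(-1/2) M P^(-x/2) = P^(1/2) sqrt M P^(-x/2),
  and cyclicity of the trace gives the same value.  The statements for Q^x and V_x are the
  mirror images, using Pol B = B (B^* B)^(-1/2) directly.

  Matrix functions are defined through spectral decompositions, so the spectral theorem for
  Hermitian matrices comes first: orthonormal eigenvectors are found one at a time by
  maximising the Rayleigh quotient on the orthogonal complement of those already found.\<close>

lemma cadj_cadj [simp]: "cadj (cadj A) = A"
  by (simp add: cadj_def vec_eq_iff)

lemma cadj_mult: "cadj (A ** B) = cadj B ** cadj A"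
  by (simp add: cadj_def vec_eq_iff matrix_matrix_mult_def mult.commute)

lemma cadj_cdiag [simp]: "cadj (cdiag l) = cdiag l"
  by (simp add: cadj_def vec_eq_iff cdiag_def)

lemma matrix_mult_cdiag_nth: "(A ** cdiag l) $ i $ j = A $ i $ j * complex_of_real (l j)"
  by (simp add: cdiag_def matrix_matrix_mult_def if_distrib cong: if_cong)

lemma cdiag_matrix_mult_nth: "(cdiag l ** A) $ i $ j = complex_of_real (l i) * A $ i $ j"
  by (simp add: cdiag_def matrix_matrix_mult_def if_distrib if_distribR cong: if_cong)

lemma cdiag_mult: "cdiag a ** cdiag b = cdiag (\<lambda>i. a i * b i)"
  by (simp add: vec_eq_iff cdiag_matrix_mult_nth) (simp add: cdiag_def)

lemma cdiag_one: "cdiag (\<lambda>i. 1) = mat 1"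
  by (simp add: cdiag_def mat_def vec_eq_iff)

lemma unitary_matD:
  assumes "unitary_mat U"
  shows "cadj U ** U = mat 1" and "U ** cadj U = mat 1"
  using assms by (auto simp: unitary_mat_def)

lemma unitary_matI: "cadj U ** U = mat 1 \<Longrightarrow> unitary_mat U"
  by (simp add: unitary_mat_def matrix_left_right_inverse)

lemma unitary_cancel_left:
  assumes "unitary_mat U"
  shows "cadj U ** (U ** X) = X" and "U ** (cadj U ** X) = X"
  by (simp_all add: matrix_mul_assoc unitary_matD[OF assms])

lemma unitary_mult: "unitary_mat U \<Longrightarrow> unitary_mat V \<Longrightarrow> unitary_mat (U ** V)"
  by (rule unitary_matI)
    (simp add: cadj_mult matrix_mul_assoc[symmetric] unitary_cancel_left unitary_matD)

lemma unitary_cadj: "unitary_mat U \<Longrightarrow> unitary_mat (cadj U)"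
  by (simp add: unitary_mat_def)

lemma hermitian_unitary_conj: "hermitian_mat (U ** cdiag l ** cadj U)"
  by (simp add: hermitian_mat_def cadj_mult matrix_mul_assoc)

lemma matrix_inv_eq:
  assumes AB: "(A::complex^'n^'n) ** B = mat 1"
  shows "matrix_inv A = B"
proof -
  have "\<exists>A'. A ** A' = mat 1 \<and> A' ** A = mat 1"
    using AB matrix_left_right_inverse by blast
  hence inv: "A ** matrix_inv A = mat 1 \<and> matrix_inv A ** A = mat 1"
    unfolding matrix_inv_def by (rule someI_ex)
  have "matrix_inv A = matrix_inv A ** (A ** B)" by (simp add: AB)
  also have "\<dots> = B" using inv by (simp add: matrix_mul_assoc)
  finally show ?thesis .
qed

section \<open>Well-definedness of the functional calculus\<close>

lemma unitary_diag_conj_fun_eq: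
  assumes U: "unitary_mat U" and V: "unitary_mat V"
    and eq: "U ** cdiag l ** cadj U = V ** cdiag m ** cadj V"
  shows "U ** cdiag (\<lambda>i. f (l i)) ** cadj U = V ** cdiag (\<lambda>i. f (m i)) ** cadj V"
proof -
  define W where "W = cadj V ** U"
  have "cadj V ** (U ** cdiag l ** cadj U) ** U = cadj V ** (V ** cdiag m ** cadj V) ** U"
    using eq by simp
  hence WD: "W ** cdiag l = cdiag m ** W"
    by (simp add: W_def matrix_mul_assoc[symmetric] unitary_cancel_left(1)[OF U]
        unitary_cancel_left(1)[OF V] unitary_matD(1)[OF U])
  \<comment> \<open>\<open>W\<close> only links coordinates with equal eigenvalues, so it also intertwines \<open>f(l)\<close> and \<open>f(m)\<close>.\<close>
  have WDf: "W ** cdiag (\<lambda>i. f (l i)) = cdiag (\<lambda>i. f (m i)) ** W"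
  proof -
    have "W $ i $ j * complex_of_real (f (l j)) = complex_of_real (f (m i)) * W $ i $ j" for i j
    proof -
      have "W $ i $ j * complex_of_real (l j) = complex_of_real (m i) * W $ i $ j"
        using arg_cong[OF WD, of "\<lambda>X. X $ i $ j"]
        by (simp add: matrix_mult_cdiag_nth cdiag_matrix_mult_nth)
      hence "W $ i $ j = 0 \<or> l j = m i" by auto
      thus ?thesis by auto
    qed
    thus ?thesis by (simp add: vec_eq_iff matrix_mult_cdiag_nth cdiag_matrix_mult_nth)
  qed
  have U_eq: "U = V ** W" by (simp add: W_def unitary_cancel_left(2)[OF V])
  have "U ** cdiag (\<lambda>i. f (l i)) ** cadj U = V ** (W ** cdiag (\<lambda>i. f (l i))) ** cadj U"
    by (subst (1) U_eq) (simp add: matrix_mul_assoc)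
  also have "\<dots> = V ** cdiag (\<lambda>i. f (m i)) ** (W ** cadj U)"
    by (simp add: WDf matrix_mul_assoc)
  also have "W ** cadj U = cadj V"
    by (simp add: W_def matrix_mul_assoc[symmetric] unitary_matD(2)[OF U])
  finally show ?thesis .
qed

lemma mfun_eq:
  assumes U: "unitary_mat U" and l: "\<forall>i. l i \<ge> 0" and A: "A = U ** cdiag l ** cadj U"
  shows "mfun f A = U ** cdiag (\<lambda>i. f (l i)) ** cadj U"
proof -
  have "\<exists>B U l. unitary_mat U \<and> (\<forall>i. l i \<ge> 0) \<and>
       A = U ** cdiag l ** cadj U \<and> B = U ** cdiag (\<lambda>i. f (l i)) ** cadj U"
    using U l A by blast
  from someI_ex[OF this] obtain V m where V: "unitary_mat V" and
    A': "A = V ** cdiag m ** cadj V" and B: "mfun f A = V ** cdiag (\<lambda>i. f (m i)) ** cadj V"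
    unfolding mfun_def by blast
  show ?thesis unfolding B using unitary_diag_conj_fun_eq[OF V U, of m l f] A A' by simp
qed

definition cinner :: "complex^'n \<Rightarrow> complex^'n \<Rightarrow> complex" where
  "cinner u v = (\<Sum>i\<in>UNIV. cnj (u$i) * v$i)"

lemma cinner_add_right: "cinner u (v + w) = cinner u v + cinner u w"
  by (simp add: cinner_def distrib_left sum.distrib)

lemma cinner_add_left: "cinner (v + w) u = cinner v u + cinner w u"
  by (simp add: cinner_def distrib_right sum.distrib)

lemma cinner_diff_right: "cinner u (v - w) = cinner u v - cinner u w"
  by (simp add: cinner_def right_diff_distrib sum_subtractf)

lemma cinner_diff_left: "cinner (v - w) u = cinner v u - cinner w u"
  by (simp add: cinner_def left_diff_distrib sum_subtractf)

lemma cinner_scale_right: "cinner u (c *s v) = c * cinner u v"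
  by (simp add: cinner_def sum_distrib_left ac_simps)

lemma cinner_scale_left: "cinner (c *s v) u = cnj c * cinner v u"
  by (simp add: cinner_def sum_distrib_left ac_simps)

lemma cinner_cnj: "cnj (cinner u v) = cinner v u"
  by (simp add: cinner_def mult.commute)

lemma cinner_sum_right: "cinner u (\<Sum>i\<in>S. g i) = (\<Sum>i\<in>S. cinner u (g i))"
  by (simp add: cinner_def sum_component sum_distrib_left) (rule sum.swap)

lemma cinner_self: "cinner v v = complex_of_real ((norm v)^2)"
proof -
  have "(norm v)^2 = (\<Sum>i\<in>UNIV. (cmod (v$i))^2)"
    by (simp add: norm_vec_def L2_set_def sum_nonneg)
  hence "complex_of_real ((norm v)^2) = (\<Sum>i\<in>UNIV. complex_of_real ((cmod (v$i))^2))"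
    by simp
  also have "\<dots> = cinner v v"
    unfolding cinner_def
    by (rule sum.cong) (simp_all add: complex_norm_square[symmetric] mult.commute)
  finally show ?thesis by simp
qed

lemma continuous_on_cinner_right: "continuous_on S (\<lambda>v. cinner u v)"
  unfolding cinner_def by (intro continuous_intros)

lemma continuous_on_cquad: "continuous_on S (\<lambda>v. Re (cinner v (A *v v)))"
  unfolding cinner_def matrix_vector_mult_def by (intro continuous_intros)

lemma matrix_vector_mult_scale: "A *v (c *s x) = c *s (A *v (x :: complex^'n))"
  by (simp add: matrix_vector_mult_def vec_eq_iff sum_distrib_left ac_simps)

lemma scale_of_real_eq_scaleR: "complex_of_real r *s x = r *\<^sub>R (x::complex^'n)"
  unfolding vec_eq_iff vector_scaleR_component vector_smult_component
  by (simp add: scaleR_conv_of_real)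

lemma cinner_cadj: "cinner u (A *v v) = cinner (cadj A *v u) v"
proof -
  have "cinner u (A *v v) = (\<Sum>i\<in>UNIV. \<Sum>j\<in>UNIV. cnj (u$i) * A$i$j * v$j)"
    by (simp add: cinner_def matrix_vector_mult_def sum_distrib_left ac_simps)
  also have "\<dots> = (\<Sum>j\<in>UNIV. \<Sum>i\<in>UNIV. cnj (u$i) * A$i$j * v$j)"
    by (rule sum.swap)
  also have "\<dots> = (\<Sum>j\<in>UNIV. \<Sum>i\<in>UNIV. cnj (cadj A $ j $ i) * cnj (u$i) * v$j)"
    by (simp add: cadj_def ac_simps)
  also have "\<dots> = cinner (cadj A *v u) v"
    by (simp add: cinner_def matrix_vector_mult_def sum_distrib_right)
  finally show ?thesis .
qed

lemma cinner_hermitian: "hermitian_mat A \<Longrightarrow> cinner u (A *v v) = cinner (A *v u) v"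
  by (simp add: cinner_cadj hermitian_mat_def)

lemma cquad_cinner: "cquad A v = cinner v (A *v v)"
  by (simp add: cquad_def cinner_def)

section \<open>The spectral theorem for Hermitian matrices\<close>

lemma psd_form_zero_imp_zero:
  fixes b :: "complex^'n \<Rightarrow> complex^'n"
  assumes lin: "\<And>x y t. b (x + complex_of_real t *s y) = b x + complex_of_real t *s b y"
    and sa: "\<And>x y. cinner x (b y) = cinner (b x) y"
    and cl: "\<And>x y t. x \<in> W \<Longrightarrow> y \<in> W \<Longrightarrow> x + complex_of_real t *s y \<in> W"
    and psd: "\<And>x. x \<in> W \<Longrightarrow> Re (cinner x (b x)) \<ge> 0"
    and v: "v \<in> W" and bv: "b v \<in> W" and z: "Re (cinner v (b v)) = 0"
  shows "b v = 0"
proof (rule ccontr)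
  assume ne: "b v \<noteq> 0"
  define w where "w = b v"
  define N where "N = (norm w)^2"
  define c where "c = Re (cinner w (b w))"
  have N: "N > 0" using ne by (simp add: N_def w_def)
  have c: "c \<ge> 0" using psd bv by (simp add: c_def w_def)
  have quadratic_nonneg: "0 \<le> 2 * t * N + t * t * c" for t
  proof -
    define x where "x = v + complex_of_real t *s w"
    have "x \<in> W" using cl v bv by (simp add: x_def w_def)
    hence "0 \<le> Re (cinner x (b x))" by (rule psd)
    also have "cinner x (b x) = cinner v (b v) + complex_of_real t * cinner v (b w)
       + complex_of_real t * cinner w (b v) + complex_of_real t * complex_of_real t * cinner w (b w)"
      by (simp add: x_def lin cinner_add_left cinner_add_right cinner_scale_left cinner_scale_right
          algebra_simps)
    also have "cinner v (b w) = cinner w w" by (simp add: sa w_def)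
    also have "cinner w (b v) = cinner w w" by (simp add: w_def)
    also have "cinner w w = complex_of_real N" by (simp add: cinner_self N_def)
    finally show ?thesis using z by (simp add: c_def algebra_simps)
  qed
  define s where "s = N / (c + 1)"
  have s: "s > 0" using N c by (simp add: s_def)
  have "s * c < N" using N c by (simp add: s_def field_simps)
  hence "- 2 * N + s * c < 0" using N by linarith
  hence "s * (- 2 * N + s * c) < 0" using s by (simp add: mult_pos_neg)
  moreover have "0 \<le> 2 * (-s) * N + (-s) * (-s) * c" by (rule quadratic_nonneg)
  ultimately show False by (simp add: algebra_simps)
qed

lemma rayleigh_quotient_attains_max:
  fixes A :: "complex^'n^'n"
  assumes W: "closed W" and sc: "\<And>x t. x \<in> W \<Longrightarrow> complex_of_real t *s x \<in> W"
    and u: "u \<in> W" "u \<noteq> 0"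
  obtains v where "v \<in> W" "norm v = 1"
    "\<And>y. y \<in> W \<Longrightarrow> Re (cinner y (A *v y)) \<le> Re (cinner v (A *v v)) * (norm y)^2"
proof -
  define q where "q v = Re (cinner v (A *v v))" for v :: "complex^'n"
  define K where "K = W \<inter> sphere 0 1"
  have K: "compact K" unfolding K_def using W by (intro closed_Int_compact) auto
  have "complex_of_real (1 / norm u) *s u \<in> K"
    using u sc unfolding scale_of_real_eq_scaleR by (simp add: K_def)
  then obtain v where v: "v \<in> K" and max: "\<And>y. y \<in> K \<Longrightarrow> q y \<le> q v"
    using continuous_attains_sup[OF K _ continuous_on_cquad] unfolding q_def by blast
  have q_scale: "q (complex_of_real t *s y) = t * t * q y" for t y
    by (simp add: q_def matrix_vector_mult_scale cinner_scale_left cinner_scale_right)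
  have "q y \<le> q v * (norm y)^2" if y: "y \<in> W" for y
  proof (cases "y = 0")
    case True thus ?thesis by (simp add: q_def cinner_def)
  next
    case False
    define r where "r = 1 / norm y"
    have "complex_of_real r *s y \<in> K"
      using y sc False unfolding scale_of_real_eq_scaleR by (simp add: K_def r_def)
    hence "r * r * q y \<le> q v" using max q_scale by metis
    hence "((norm y)^2 * (r * r)) * q y \<le> (norm y)^2 * q v"
      by (simp add: mult_left_mono mult.assoc)
    moreover have "(norm y)^2 * (r * r) = 1" using False by (simp add: r_def power2_eq_square)
    ultimately show ?thesis by (simp add: mult.commute)
  qed
  thus ?thesis using that v by (auto simp: K_def q_def)
qed

lemma hermitian_eigenvector_in_invariant:
  fixes A :: "complex^'n^'n"
  assumes herm: "hermitian_mat A" and W: "closed W"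
    and cl: "\<And>x y t. x \<in> W \<Longrightarrow> y \<in> W \<Longrightarrow> x + complex_of_real t *s y \<in> W"
    and sc: "\<And>x t. x \<in> W \<Longrightarrow> complex_of_real t *s x \<in> W"
    and inv: "\<And>x. x \<in> W \<Longrightarrow> A *v x \<in> W"
    and u: "u \<in> W" "u \<noteq> 0"
  obtains v \<mu> where "v \<in> W" "cinner v v = 1" "A *v v = complex_of_real \<mu> *s v"
proof -
  obtain v where v: "v \<in> W" "norm v = 1"
    and bound: "\<And>y. y \<in> W \<Longrightarrow> Re (cinner y (A *v y)) \<le> Re (cinner v (A *v v)) * (norm y)^2"
    using rayleigh_quotient_attains_max[OF W sc u] by blast
  define \<mu> where "\<mu> = Re (cinner v (A *v v))"
  \<comment> \<open>\<open>\<mu> - A\<close> is positive semidefinite on \<open>W\<close> and its form vanishes at \<open>v\<close>.\<close>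
  define b where "b x = complex_of_real \<mu> *s x - A *v x" for x
  have lin: "b (x + complex_of_real t *s y) = b x + complex_of_real t *s b y" for x y t
    by (simp add: b_def matrix_vector_right_distrib matrix_vector_mult_scale algebra_simps
        vector_sadd_rdistrib vector_ssub_ldistrib)
  have sa: "cinner x (b y) = cinner (b x) y" for x y
    by (simp add: b_def cinner_diff_left cinner_diff_right cinner_scale_left cinner_scale_right
        cinner_hermitian[OF herm])
  have bW: "b x \<in> W" if "x \<in> W" for x
  proof -
    have "complex_of_real \<mu> *s x + complex_of_real (-1) *s (A *v x) \<in> W"
      using that by (intro cl sc inv)
    thus ?thesis by (simp add: b_def)
  qed
  have psd: "Re (cinner x (b x)) \<ge> 0" if "x \<in> W" for x
    using bound[OF that]
    by (simp add: b_def cinner_diff_right cinner_scale_right cinner_self \<mu>_def)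
  have "Re (cinner v (b v)) = 0"
    by (simp add: b_def cinner_diff_right cinner_scale_right cinner_self v \<mu>_def)
  hence "b v = 0" by (intro psd_form_zero_imp_zero[OF lin sa cl psd v(1) bW[OF v(1)]])
  hence "A *v v = complex_of_real \<mu> *s v" by (simp add: b_def)
  moreover have "cinner v v = 1" by (simp add: cinner_self v)
  ultimately show ?thesis using that v by blast
qed

lemma orthogonal_complement_nonzero:
  fixes F :: "'i \<Rightarrow> complex^'n"
  assumes S: "finite S" "card S < CARD('n)"
    and on: "\<And>i j. i \<in> S \<Longrightarrow> j \<in> S \<Longrightarrow> cinner (F i) (F j) = (if i = j then 1 else 0)"
  shows "\<exists>u. u \<noteq> 0 \<and> (\<forall>i\<in>S. cinner (F i) u = 0)"
proof (rule ccontr)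
  assume "\<not> ?thesis"
  hence only_zero: "u = 0" if "\<forall>i\<in>S. cinner (F i) u = 0" for u
    using that by blast
  have "v \<in> vec.span (F ` S)" for v
  proof -
    define r where "r = v - (\<Sum>i\<in>S. cinner (F i) v *s F i)"
    have "cinner (F j) r = 0" if j: "j \<in> S" for j
    proof -
      have "(\<Sum>i\<in>S. cinner (F j) (cinner (F i) v *s F i)) =
            (\<Sum>i\<in>S. if i = j then cinner (F j) v else 0)"
        by (rule sum.cong) (auto simp: cinner_scale_right on j)
      thus ?thesis using j S(1) by (simp add: r_def cinner_diff_right cinner_sum_right)
    qed
    hence "r = 0" using only_zero by blast
    hence "v = (\<Sum>i\<in>S. cinner (F i) v *s F i)" by (simp add: r_def)
    also have "\<dots> \<in> vec.span (F ` S)"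
      by (intro vec.span_sum vec.span_scale vec.span_base) auto
    finally show ?thesis .
  qed
  hence "vec.dim (UNIV :: (complex^'n) set) \<le> card (F ` S)"
    using S(1) by (intro vec.dim_le_card) auto
  also have "\<dots> \<le> card S" using S(1) by (rule card_image_le)
  finally show False using S(2) vec_dim_card[where 'a=complex and 'n='n] by simp
qed

lemma hermitian_orthonormal_eigenvectors:
  fixes A :: "complex^'n^'n" and S :: "'n set"
  assumes herm: "hermitian_mat A"
  shows "\<exists>F l. (\<forall>i\<in>S. \<forall>j\<in>S. cinner (F i) (F j) = (if i = j then 1 else 0)) \<and>
               (\<forall>i\<in>S. A *v F i = complex_of_real (l i) *s F i)"
  using finite[of S]
proof (induction S rule: finite_induct)
  case empty thus ?case by auto
next
  case (insert a S)
  from insert.IH obtain F l where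
    on: "\<And>i j. i\<in>S \<Longrightarrow> j\<in>S \<Longrightarrow> cinner (F i) (F j) = (if i = j then 1 else 0)" and
    ev: "\<And>i. i\<in>S \<Longrightarrow> A *v F i = complex_of_real (l i) *s F i" by blast
  define W where "W = (\<Inter>i\<in>S. {v. cinner (F i) v = 0})"
  have "card S < CARD('n)"
    using insert.hyps card_mono[of UNIV "insert a S"] by simp
  then obtain u where "u \<noteq> 0" "u \<in> W"
    using orthogonal_complement_nonzero[OF insert.hyps(1) _ on] by (auto simp: W_def)
  moreover have "closed W" unfolding W_def
    by (intro closed_INT ballI closed_Collect_eq continuous_on_cinner_right continuous_intros)
  moreover have "x + complex_of_real t *s y \<in> W" if "x \<in> W" "y \<in> W" for x y t
    using that by (simp add: W_def cinner_add_right cinner_scale_right)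
  moreover have "complex_of_real t *s x \<in> W" if "x \<in> W" for x t
    using that by (simp add: W_def cinner_scale_right)
  moreover have "A *v x \<in> W" if "x \<in> W" for x
    using that by (simp add: W_def cinner_hermitian[OF herm] ev cinner_scale_left)
  ultimately obtain v \<mu> where v: "v \<in> W" "cinner v v = 1" "A *v v = complex_of_real \<mu> *s v"
    using hermitian_eigenvector_in_invariant[OF herm] by metis
  have vo: "cinner (F i) v = 0" "cinner v (F i) = 0" if "i \<in> S" for i
    using v that cinner_cnj[of "F i" v] by (auto simp: W_def)
  have "\<forall>i\<in>insert a S. \<forall>j\<in>insert a S.
      cinner ((F(a := v)) i) ((F(a := v)) j) = (if i = j then 1 else 0)"
    using on vo v(2) insert.hyps(2) by auto
  moreover have "\<forall>i\<in>insert a S. A *v (F(a := v)) i = complex_of_real ((l(a := \<mu>)) i) *s (F(a := v)) i"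
    using ev v by simp
  ultimately show ?case by blast
qed

lemma hermitian_spectral_decomposition:
  fixes A :: "complex^'n^'n"
  assumes herm: "hermitian_mat A"
  obtains U l where "unitary_mat U" "A = U ** cdiag l ** cadj U"
    "posdef_mat A \<longrightarrow> (\<forall>i. l i > 0)"
proof -
  obtain F :: "'n \<Rightarrow> complex^'n" and l where
    on: "\<And>i j. cinner (F i) (F j) = (if i = j then 1 else 0)" and
    ev: "\<And>i. A *v F i = complex_of_real (l i) *s F i"
    using hermitian_orthonormal_eigenvectors[OF herm, of UNIV] by auto
  define U :: "complex^'n^'n" where "U = (\<chi> i j. F j $ i)"
  have "cadj U ** U = mat 1"
    using on by (simp add: vec_eq_iff U_def cadj_def matrix_matrix_mult_def mat_def cinner_def)
  hence U: "unitary_mat U" by (rule unitary_matI)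
  have "(A ** U) $ i $ j = (U ** cdiag l) $ i $ j" for i j
  proof -
    have "(A ** U) $ i $ j = (A *v F j) $ i"
      by (simp add: U_def matrix_matrix_mult_def matrix_vector_mult_def)
    also have "\<dots> = (U ** cdiag l) $ i $ j"
      by (simp add: ev matrix_mult_cdiag_nth U_def mult.commute)
    finally show ?thesis .
  qed
  hence AU: "A ** U = U ** cdiag l" by (simp add: vec_eq_iff)
  have "A = A ** (U ** cadj U)" by (simp add: unitary_matD(2)[OF U])
  also have "\<dots> = U ** cdiag l ** cadj U" by (simp add: matrix_mul_assoc AU)
  finally have "A = U ** cdiag l ** cadj U" .
  moreover have "posdef_mat A \<longrightarrow> (\<forall>i. l i > 0)"
  proof (intro impI allI)
    fix i assume "posdef_mat A"
    moreover have "F i \<noteq> 0" using on[of i i] by (auto simp: cinner_def)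
    ultimately have "Re (cquad A (F i)) > 0" by (simp add: posdef_mat_def)
    thus "l i > 0" using on[of i i] by (simp add: cquad_cinner ev cinner_scale_right)
  qed
  ultimately show ?thesis using U by (intro that)
qed

section \<open>Powers of positive definite matrices\<close>

definition pos_eigen_decomp :: "complex^'n^'n \<Rightarrow> complex^'n^'n \<Rightarrow> ('n \<Rightarrow> real) \<Rightarrow> bool" where
  "pos_eigen_decomp A U l \<longleftrightarrow> unitary_mat U \<and> (\<forall>i. l i > 0) \<and> A = U ** cdiag l ** cadj U"

lemma posdef_obtain_eigen_decomp:
  assumes "posdef_mat A"
  obtains U l where "pos_eigen_decomp A U l"
proof -
  have "hermitian_mat A" using assms by (simp add: posdef_mat_def)
  then obtain U l where "unitary_mat U" "A = U ** cdiag l ** cadj U"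
      "posdef_mat A \<longrightarrow> (\<forall>i. l i > 0)"
    by (rule hermitian_spectral_decomposition)
  hence "pos_eigen_decomp A U l" using assms by (simp add: pos_eigen_decomp_def)
  thus ?thesis by (rule that)
qed

lemma mfun_eigen_decomp:
  "pos_eigen_decomp A U l \<Longrightarrow> mfun f A = U ** cdiag (\<lambda>i. f (l i)) ** cadj U"
  unfolding pos_eigen_decomp_def by (rule mfun_eq) (auto simp: less_imp_le)

lemma mpow_eigen_decomp:
  "pos_eigen_decomp A U l \<Longrightarrow> mpow A a = U ** cdiag (\<lambda>i. l i powr a) ** cadj U"
  unfolding mpow_def by (rule mfun_eigen_decomp)

lemma msqrt_eigen_decomp:
  "pos_eigen_decomp A U l \<Longrightarrow> msqrt A = U ** cdiag (\<lambda>i. sqrt (l i)) ** cadj U"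
  unfolding msqrt_def by (rule mfun_eigen_decomp)

lemma eigen_decomp_mpow:
  assumes "pos_eigen_decomp A U l"
  shows "pos_eigen_decomp (mpow A a) U (\<lambda>i. l i powr a)"
proof -
  have "l i powr a > 0" for i
    using assms by (metis less_irrefl pos_eigen_decomp_def powr_gt_zero)
  thus ?thesis using assms mpow_eigen_decomp[OF assms, of a] by (simp add: pos_eigen_decomp_def)
qed

lemma eigen_decomp_unitary_conj:
  "pos_eigen_decomp A V l \<Longrightarrow> unitary_mat U \<Longrightarrow>
     pos_eigen_decomp (U ** A ** cadj U) (U ** V) l"
  by (simp add: pos_eigen_decomp_def unitary_mult cadj_mult matrix_mul_assoc)

lemma unitary_diag_conj_mult: "unitary_mat U \<Longrightarrow>
   (U ** cdiag a ** cadj U) ** (U ** cdiag b ** cadj U) = U ** cdiag (\<lambda>i. a i * b i) ** cadj U"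
  by (simp add: matrix_mul_assoc[symmetric] unitary_cancel_left(1) cdiag_mult[symmetric])

context
  fixes A :: "complex^'n^'n"
  assumes pd: "posdef_mat A"
begin

lemma mpow_add: "mpow A a ** mpow A b = mpow A (a + b)"
proof -
  obtain U l where r: "pos_eigen_decomp A U l" using posdef_obtain_eigen_decomp[OF pd] .
  hence U: "unitary_mat U" by (simp add: pos_eigen_decomp_def)
  show ?thesis unfolding mpow_eigen_decomp[OF r] unitary_diag_conj_mult[OF U]
    by (simp add: powr_add[symmetric] of_real_mult[symmetric] del: of_real_mult)
qed

lemma mpow_add_assoc: "mpow A a ** (mpow A b ** X) = mpow A (a + b) ** X"
  by (simp add: matrix_mul_assoc mpow_add)

lemma mpow_mpow: "mpow (mpow A a) b = mpow A (a * b)"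
proof -
  obtain U l where r: "pos_eigen_decomp A U l" using posdef_obtain_eigen_decomp[OF pd] .
  have "mpow (mpow A a) b = U ** cdiag (\<lambda>i. (l i powr a) powr b) ** cadj U"
    by (rule mpow_eigen_decomp[OF eigen_decomp_mpow[OF r]])
  also have "\<dots> = mpow A (a * b)" unfolding mpow_eigen_decomp[OF r] by (simp add: powr_powr)
  finally show ?thesis .
qed

lemma msqrt_eq_mpow_half: "msqrt A = mpow A (1/2)"
proof -
  obtain U l where r: "pos_eigen_decomp A U l" using posdef_obtain_eigen_decomp[OF pd] .
  hence "\<And>i. l i > 0" by (simp add: pos_eigen_decomp_def)
  thus ?thesis unfolding mpow_eigen_decomp[OF r] msqrt_eigen_decomp[OF r]
    by (simp add: powr_half_sqrt less_imp_le)
qed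

lemma msqrt_mpow: "msqrt (mpow A a) = mpow A (a / 2)"
proof -
  obtain U l where r: "pos_eigen_decomp A U l" using posdef_obtain_eigen_decomp[OF pd] .
  hence l: "\<And>i. l i > 0" by (simp add: pos_eigen_decomp_def)
  have "msqrt (mpow A a) = U ** cdiag (\<lambda>i. sqrt (l i powr a)) ** cadj U"
    by (rule msqrt_eigen_decomp[OF eigen_decomp_mpow[OF r]])
  also have "\<dots> = mpow A (a / 2)" unfolding mpow_eigen_decomp[OF r]
    using l by (simp add: powr_half_sqrt[symmetric] less_imp_le powr_powr)
  finally show ?thesis .
qed

lemma mpow_1: "mpow A 1 = A"
proof -
  obtain U l where r: "pos_eigen_decomp A U l" using posdef_obtain_eigen_decomp[OF pd] .
  hence "\<And>i. l i > 0" by (simp add: pos_eigen_decomp_def)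
  hence "(\<lambda>i. l i powr 1) = l" by (simp add: fun_eq_iff abs_of_pos)
  thus ?thesis using r unfolding mpow_eigen_decomp[OF r] by (simp add: pos_eigen_decomp_def)
qed

lemma mpow_0: "mpow A 0 = mat 1"
proof -
  obtain U l where r: "pos_eigen_decomp A U l" using posdef_obtain_eigen_decomp[OF pd] .
  hence "unitary_mat U" "\<And>i. l i \<noteq> 0" by (auto simp: pos_eigen_decomp_def less_imp_neq[symmetric])
  thus ?thesis unfolding mpow_eigen_decomp[OF r] by (simp add: cdiag_one unitary_matD(2))
qed

lemma cadj_mpow: "cadj (mpow A a) = mpow A a"
proof -
  obtain U l where r: "pos_eigen_decomp A U l" using posdef_obtain_eigen_decomp[OF pd] .
  show ?thesis using hermitian_unitary_conj
    unfolding mpow_eigen_decomp[OF r] hermitian_mat_def .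
qed

lemma mpow_mult: "mpow A a ** A = mpow A (a + 1)"
  using mpow_add[of a 1] by (simp add: mpow_1)

lemma mult_mpow: "A ** mpow A a = mpow A (1 + a)"
  using mpow_add[of 1 a] by (simp add: mpow_1)

lemma matrix_inv_mpow: "matrix_inv (mpow A a) = mpow A (-a)"
  by (rule matrix_inv_eq) (simp add: mpow_add mpow_0)

lemma mpow_unitary_conj:
  assumes "unitary_mat U"
  shows "mpow (U ** A ** cadj U) a = U ** mpow A a ** cadj U"
proof -
  obtain V l where r: "pos_eigen_decomp A V l" using posdef_obtain_eigen_decomp[OF pd] .
  show ?thesis
    unfolding mpow_eigen_decomp[OF eigen_decomp_unitary_conj[OF r assms]] mpow_eigen_decomp[OF r]
    by (simp add: cadj_mult matrix_mul_assoc)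
qed

end

lemma posdef_congruence:
  assumes Q: "posdef_mat Q" and GH: "G ** H = mat 1"
  shows "posdef_mat (cadj H ** Q ** H)"
proof -
  have "hermitian_mat (cadj H ** Q ** H)"
    using Q by (simp add: posdef_mat_def hermitian_mat_def cadj_mult matrix_mul_assoc)
  moreover have "Re (cquad (cadj H ** Q ** H) v) > 0" if v: "v \<noteq> 0" for v
  proof -
    have "H *v v \<noteq> 0"
    proof
      assume "H *v v = 0"
      hence "G *v (H *v v) = 0" by simp
      thus False using v by (simp add: matrix_vector_mul_assoc GH)
    qed
    hence "Re (cquad Q (H *v v)) > 0" using Q by (simp add: posdef_mat_def)
    also have "cquad Q (H *v v) = cquad (cadj H ** Q ** H) v"
      by (simp add: cquad_cinner matrix_vector_mul_assoc[symmetric] cinner_cadj)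
    finally show ?thesis .
  qed
  ultimately show ?thesis by (simp add: posdef_mat_def)
qed

lemma posdef_mpow_congruence:
  "posdef_mat P \<Longrightarrow> posdef_mat Q \<Longrightarrow> posdef_mat (mpow P a ** Q ** mpow P a)"
  using posdef_congruence[of Q "mpow P (-a)" "mpow P a"] by (simp add: mpow_add mpow_0 cadj_mpow)

section \<open>Polar factor and fidelity\<close>

lemma Pol_eq_left:
  assumes "posdef_mat (A ** cadj A)"
  shows "Pol A = mpow (A ** cadj A) (-1/2) ** A"
proof -
  define M where "M = A ** cadj A"
  have pM: "posdef_mat M" using assms by (simp add: M_def)
  define W where "W = mpow M (-1/2) ** A"
  have A: "A = mpow M (1/2) ** W"
    using pM by (simp add: W_def mpow_add_assoc mpow_0)
  have "W ** cadj W = mpow M (-1/2) ** M ** mpow M (-1/2)"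
    using pM by (simp add: W_def M_def cadj_mult cadj_mpow matrix_mul_assoc)
  also have "\<dots> = mat 1" using pM by (simp add: mpow_mult mpow_add mpow_0)
  finally have W: "unitary_mat W" by (simp add: unitary_mat_def matrix_left_right_inverse)
  have "cadj A ** A = cadj (mpow M (1/2) ** W) ** (mpow M (1/2) ** W)"
    by (simp only: A[symmetric])
  also have "\<dots> = cadj W ** M ** cadj (cadj W)"
    using pM by (simp add: cadj_mult cadj_mpow mpow_add_assoc mpow_1 flip: matrix_mul_assoc)
  finally have "mpow (cadj A ** A) (-1/2) = cadj W ** mpow M (-1/2) ** W"
    using mpow_unitary_conj[OF pM unitary_cadj[OF W]] by simp
  hence "Pol A = A ** (cadj W ** mpow M (-1/2) ** W)" by (simp add: Pol_def)
  also have "\<dots> = mpow M (1/2) ** (W ** (cadj W ** (mpow M (-1/2) ** W)))"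
    by (subst A) (simp add: matrix_mul_assoc)
  also have "\<dots> = W"
    using pM by (simp add: unitary_cancel_left(2)[OF W] mpow_add_assoc mpow_0)
  finally show ?thesis by (simp add: W_def M_def)
qed

lemma genF_mpow_fst:
  assumes pA: "posdef_mat A"
  shows "genF (mpow A x) A B =
    trace (mpow A ((1-x)/2) ** msqrt (mpow A (x/2) ** B ** mpow A (x/2)))"
proof -
  have root: "mpow (mpow A x) (1/2) = mpow A (x/2)" using pA by (simp add: mpow_mpow)
  have "mpow A (x/2) ** A ** mpow A (x/2) = mpow A (x/2 + 1 + x/2)"
    using pA by (simp add: mpow_mult mpow_add)
  also have "x/2 + 1 + x/2 = 1 + x" by simp
  finally have inner: "mpow A (x/2) ** A ** mpow A (x/2) = mpow A (1 + x)" .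
  have inverse: "msqrt (mpow A (1 + x)) ** matrix_inv (mpow A x) = mpow A ((1-x)/2)"
    using pA by (simp add: msqrt_mpow matrix_inv_mpow mpow_add field_simps)
  show ?thesis unfolding genF_def root inner inverse ..
qed

lemma genF_mpow_snd:
  assumes pB: "posdef_mat B"
  shows "genF (mpow B x) A B =
    trace (msqrt (mpow B (x/2) ** A ** mpow B (x/2)) ** mpow B ((1-x)/2))"
proof -
  have root: "mpow (mpow B x) (1/2) = mpow B (x/2)" using pB by (simp add: mpow_mpow)
  have "mpow B (x/2) ** B ** mpow B (x/2) = mpow B (x/2 + 1 + x/2)"
    using pB by (simp add: mpow_mult mpow_add)
  also have "x/2 + 1 + x/2 = 1 + x" by simp
  finally have inner: "mpow B (x/2) ** B ** mpow B (x/2) = mpow B (1 + x)" .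
  have inverse: "matrix_inv (mpow B x) ** msqrt (mpow B (1 + x)) = mpow B ((1-x)/2)"
    using pB by (simp add: msqrt_mpow matrix_inv_mpow mpow_add field_simps)
  show ?thesis unfolding genF_def root inner
    by (simp add: inverse matrix_mul_assoc[symmetric])
qed

lemma trace_Pol_mpow_fst:
  assumes pP: "posdef_mat P" and pQ: "posdef_mat Q"
  shows "trace (mpow P (1/2) ** Pol (mpow P (x/2) ** mpow Q (1/2)) ** mpow Q (1/2))
       = trace (mpow P ((1-x)/2) ** msqrt (mpow P (x/2) ** Q ** mpow P (x/2)))"
proof -
  define H where "H = mpow P (x/2)"
  define Hi where "Hi = mpow P (-x/2)"
  define M where "M = H ** Q ** H"
  have pM: "posdef_mat M" unfolding M_def H_def using pP pQ by (rule posdef_mpow_congruence)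
  have "H ** mpow Q (1/2) ** cadj (H ** mpow Q (1/2)) = M"
    using pP pQ by (simp add: H_def M_def cadj_mult cadj_mpow mpow_add_assoc mpow_1
        flip: matrix_mul_assoc)
  hence Pol: "Pol (H ** mpow Q (1/2)) = mpow M (-1/2) ** (H ** mpow Q (1/2))"
    using Pol_eq_left[of "H ** mpow Q (1/2)"] pM by simp
  have "mpow P (1/2) ** Pol (H ** mpow Q (1/2)) ** mpow Q (1/2)
      = mpow P (1/2) ** (mpow M (-1/2) ** (H ** Q))"
    using pQ by (simp add: Pol mpow_add mpow_1 flip: matrix_mul_assoc)
  also have "H ** Q = M ** Hi"
    using pP by (simp add: M_def H_def Hi_def mpow_add mpow_0 flip: matrix_mul_assoc)
  also have "mpow M (-1/2) ** (M ** Hi) = msqrt M ** Hi"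
    using pM by (simp add: mpow_mult msqrt_eq_mpow_half matrix_mul_assoc)
  finally have "trace (mpow P (1/2) ** Pol (H ** mpow Q (1/2)) ** mpow Q (1/2))
      = trace (mpow P (1/2) ** (msqrt M ** Hi))" by simp
  also have "\<dots> = trace (Hi ** mpow P (1/2) ** msqrt M)"
    by (metis matrix_mul_assoc trace_mul_sym)
  also have "Hi ** mpow P (1/2) = mpow P ((1-x)/2)"
    using pP by (simp add: Hi_def mpow_add field_simps)
  finally show ?thesis by (simp only: H_def M_def)
qed

lemma trace_Pol_mpow_snd:
  assumes pP: "posdef_mat P" and pQ: "posdef_mat Q"
  shows "trace (mpow P (1/2) ** Pol (mpow P (1/2) ** mpow Q (x/2)) ** mpow Q (1/2))
       = trace (msqrt (mpow Q (x/2) ** P ** mpow Q (x/2)) ** mpow Q ((1-x)/2))"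
proof -
  define K where "K = mpow Q (x/2)"
  define Ki where "Ki = mpow Q (-x/2)"
  define M where "M = K ** P ** K"
  have pM: "posdef_mat M" unfolding M_def K_def using pQ pP by (rule posdef_mpow_congruence)
  have "cadj (mpow P (1/2) ** K) ** (mpow P (1/2) ** K) = M"
    using pP pQ by (simp add: K_def M_def cadj_mult cadj_mpow mpow_add_assoc mpow_1
        flip: matrix_mul_assoc)
  hence Pol: "Pol (mpow P (1/2) ** K) = mpow P (1/2) ** K ** mpow M (-1/2)"
    by (simp add: Pol_def)
  have "mpow P (1/2) ** Pol (mpow P (1/2) ** K) ** mpow Q (1/2)
      = P ** K ** mpow M (-1/2) ** mpow Q (1/2)"
    using pP by (simp add: Pol mpow_add_assoc mpow_1 flip: matrix_mul_assoc)
  also have "P ** K = Ki ** M"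
    using pQ by (simp add: M_def K_def Ki_def mpow_add_assoc mpow_0 flip: matrix_mul_assoc)
  also have "Ki ** M ** mpow M (-1/2) = Ki ** msqrt M"
    using pM by (simp add: mult_mpow msqrt_eq_mpow_half flip: matrix_mul_assoc)
  finally have "trace (mpow P (1/2) ** Pol (mpow P (1/2) ** K) ** mpow Q (1/2))
      = trace (Ki ** msqrt M ** mpow Q (1/2))" by simp
  also have "\<dots> = trace (msqrt M ** (mpow Q (1/2) ** Ki))"
    by (metis matrix_mul_assoc trace_mul_sym)
  also have "mpow Q (1/2) ** Ki = mpow Q ((1-x)/2)"
    using pQ by (simp add: Ki_def mpow_add field_simps)
  finally show ?thesis by (simp only: K_def M_def)
qed

theorem mainTheorem10:
  fixes P Q :: "complex^'n^'n" and x :: real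
  assumes "posdef_mat P" and "posdef_mat Q"
  defines "U \<equiv> Pol (mpow P (x/2) ** mpow Q (1/2))"
      and "V \<equiv> Pol (mpow P (1/2) ** mpow Q (x/2))"
  shows "genF (mpow P x) P Q = trace (mpow P (1/2) ** U ** mpow Q (1/2))
       \<and> trace (mpow P (1/2) ** U ** mpow Q (1/2))
           = trace (mpow P ((1 - x)/2) ** msqrt (mpow P (x/2) ** Q ** mpow P (x/2)))
       \<and> genF (mpow Q x) P Q = trace (mpow P (1/2) ** V ** mpow Q (1/2))
       \<and> trace (mpow P (1/2) ** V ** mpow Q (1/2))
           = trace (msqrt (mpow Q (x/2) ** P ** mpow Q (x/2)) ** mpow Q ((1 - x)/2))"
  using genF_mpow_fst[OF assms(1), of x Q] genF_mpow_snd[OF assms(2), of x P]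
    trace_Pol_mpow_fst[OF assms(1,2), of x] trace_Pol_mpow_snd[OF assms(1,2), of x]
  unfolding U_def V_def by simp

end
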